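(* Let $n\in\mathbb N$, let $(R,\mathcal R,\rho)$ be a $\sigma$-finite measure space with $\rho(R)>0$, and let $E_1,\dots,E_L\in\mathcal T$ be pairwise disjoint and locally ergodic with respect to $\mathbb G$. Put $\mathcal T_E:=\mathcal T|_{T\setminus(E_1\cup\dots\cup E_L)}\vee\sigma(E_1,\dots,E_L)$ and $\mathcal N_n:=\{A\in(\mathcal T\otimes\mathcal R)^{\otimes n}:(\tau\otimes\rho)^{\otimes n}(A)=0\}$. Then $\mathcal I(\mathbb G[n])\subseteq(\mathcal T_E\otimes\mathcal R)^{\otimes n}\vee\mathcal N_n$.
   Context: $(T,\mathcal T,\tau,(\mathcal T_N)_{N\ge0})$ is a filtered probability space with refining finite partitions $T=T_{N,1}\cup\dots\cup T_{N,L_N}$, $N=0,1,2,\dots$, such that $\mathcal T_N=\sigma(T_{N,1},\dots,T_{N,L_N})$, $\tau(T_{N,l})>0$ for all $N,l$, $\lim_N\sup_l\tau(T_{N,l})=0$, and $\mathcal T=\bigvee_N\mathcal T_N$. $\mathbb G$ is a countable group of bijective bi-measurable maps $g:T\to T$. A set $E\subseteq T$ with $\tau(E)>0$ is finite locally ergodic w.r.t. $\mathbb G$ if there is $N_E\ge0$ with $E\in\mathcal T_{N_E}$ such that for all $N\ge N_E$ and all $l\neq m$ with $A:=T_{N,l}\cup T_{N,m}\subseteq E$ there is a subgroup $\mathbb H\subseteq\mathbb G$ with (a) $g|_{A^c}=\mathrm{id}_{A^c}$ for all $g\in\mathbb H$, and (b) the probability space $(A,\mathcal I(\mathbb H|_A),\tau_A)$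 is trivial (only sets of measure $0$ or $1$), where $\mathbb H|_A$ is the group of restrictions to $A$, $\tau_A$ the normalized restriction of $\tau$ to $A$. $E$ is locally ergodic w.r.t. $\mathbb G$ if $E=\bigcup_jE^j$ for an increasing sequence of finite locally ergodic sets $E^j\subseteq E$. $\mathbb G[n]$ is the group of maps $g[n]:(T\times R)^n\to(T\times R)^n$, $((t_1,x_1),\dots,(t_n,x_n))\mapsto((g(t_1),x_1),\dots,(g(t_n),x_n))$, $g\in\mathbb G$. For a group $\mathbb A$ of automorphisms of a measurable space $(S,\Sigma)$, the invariant $\sigma$-algebra is $\mathcal I(\mathbb A)=\{B\in\Sigma:B=T^{-1}(B)\ \forall T\in\mathbb A\}$; here $\Sigma=(\mathcal T\otimes\mathcal R)^{\otimes n}$. $\mathcal T|_A$ denotes the trace $\sigma$-algebra on $A$. *)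

theory Defs
  imports "HOL-Probability.Probability"
begin

text \<open>The probability space (T, \<T>, \<tau>) is modelled on a type 't with space = UNIV.
  The N-th partition consists of the cells P N l for l < Lp N.\<close>

definition partition_filtration ::
  "'t measure \<Rightarrow> (nat \<Rightarrow> nat) \<Rightarrow> (nat \<Rightarrow> nat \<Rightarrow> 't set) \<Rightarrow> bool" where
  "partition_filtration \<tau> Lp P \<longleftrightarrow>
     (\<forall>N. \<forall>l<Lp N. P N l \<in> sets \<tau> \<and> measure \<tau> (P N l) > 0)
   \<and> (\<forall>N. (\<Union>l<Lp N. P N l) = space \<tau>)
   \<and> (\<forall>N. disjoint_family_on (P N) {..<Lp N})
   \<and> (\<forall>N. \<forall>l<Lp (Suc N). \<exists>m<Lp N. P (Suc N) l \<subseteq> P N m)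
   \<and> ((\<lambda>N. Max {measure \<tau> (P N l) | l. l < Lp N}) \<longlonglongrightarrow> 0)
   \<and> sets \<tau> = sigma_sets (space \<tau>) (\<Union>N. {P N l | l. l < Lp N})"

definition TN :: "'t measure \<Rightarrow> (nat \<Rightarrow> nat) \<Rightarrow> (nat \<Rightarrow> nat \<Rightarrow> 't set) \<Rightarrow> nat \<Rightarrow> 't set set" where
  "TN \<tau> Lp P N = sigma_sets (space \<tau>) {P N l | l. l < Lp N}"

definition aut_group :: "'t measure \<Rightarrow> ('t \<Rightarrow> 't) set \<Rightarrow> bool" where
  "aut_group \<tau> G \<longleftrightarrow> countable G \<and> id \<in> G
     \<and> (\<forall>g\<in>G. \<forall>h\<in>G. g \<circ> h \<in> G)
     \<and> (\<forall>g\<in>G. bij g \<and> inv g \<in> G \<and> g \<in> measurable \<tau> \<tau> \<and> inv g \<in> measurable \<tau> \<tau>)"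

definition subgroup_of :: "('t \<Rightarrow> 't) set \<Rightarrow> ('t \<Rightarrow> 't) set \<Rightarrow> bool" where
  "subgroup_of H G \<longleftrightarrow> H \<subseteq> G \<and> id \<in> H \<and> (\<forall>g\<in>H. \<forall>h\<in>H. g \<circ> h \<in> H)
     \<and> (\<forall>g\<in>H. inv g \<in> H)"

text \<open>(A, I(H|_A), \<tau>_A) is trivial: every H|_A-invariant set in the trace sigma-algebra
  \<T>|_A has normalized measure 0 or 1.\<close>
definition invariant_trivial :: "'t measure \<Rightarrow> ('t \<Rightarrow> 't) set \<Rightarrow> 't set \<Rightarrow> bool" where
  "invariant_trivial \<tau> H A \<longleftrightarrow>
     (\<forall>B. B \<in> {C \<inter> A | C. C \<in> sets \<tau>} \<and> (\<forall>g\<in>H. {x\<in>A. g x \<in> B} = B)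
        \<longrightarrow> measure \<tau> B / measure \<tau> A = 0 \<or> measure \<tau> B / measure \<tau> A = 1)"

definition finite_locally_ergodic ::
  "'t measure \<Rightarrow> (nat \<Rightarrow> nat) \<Rightarrow> (nat \<Rightarrow> nat \<Rightarrow> 't set) \<Rightarrow> ('t \<Rightarrow> 't) set \<Rightarrow> 't set \<Rightarrow> bool" where
  "finite_locally_ergodic \<tau> Lp P G E \<longleftrightarrow> E \<in> sets \<tau> \<and> measure \<tau> E > 0 \<and>
     (\<exists>NE. E \<in> TN \<tau> Lp P NE \<and>
       (\<forall>N\<ge>NE. \<forall>l<Lp N. \<forall>m<Lp N. l \<noteq> m \<and> P N l \<union> P N m \<subseteq> E \<longrightarrow>
          (\<exists>H. subgroup_of H G
             \<and> (\<forall>g\<in>H. \<forall>x. x \<notin> P N l \<union> P N m \<longrightarrow> g x = x)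
             \<and> invariant_trivial \<tau> H (P N l \<union> P N m))))"

definition locally_ergodic ::
  "'t measure \<Rightarrow> (nat \<Rightarrow> nat) \<Rightarrow> (nat \<Rightarrow> nat \<Rightarrow> 't set) \<Rightarrow> ('t \<Rightarrow> 't) set \<Rightarrow> 't set \<Rightarrow> bool" where
  "locally_ergodic \<tau> Lp P G E \<longleftrightarrow>
     (\<exists>Ej. incseq Ej \<and> (\<forall>j. Ej j \<subseteq> E \<and> finite_locally_ergodic \<tau> Lp P G (Ej j))
        \<and> (\<Union>j. Ej j) = E)"

text \<open>g[n] acting on (T \<times> R)^n, points of (T \<times> R)^n being functions on {..<n}.\<close>
definition gn :: "('t \<Rightarrow> 't) \<Rightarrow> nat \<Rightarrow> (nat \<Rightarrow> 't \<times> 'r) \<Rightarrow> (nat \<Rightarrow> 't \<times> 'r)" where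
  "gn g n x = (\<lambda>i\<in>{..<n}. (g (fst (x i)), snd (x i)))"

definition invariant_sets :: "'a measure \<Rightarrow> ('a \<Rightarrow> 'a) set \<Rightarrow> 'a set set" where
  "invariant_sets M F = {B \<in> sets M. \<forall>f\<in>F. B = f -` B \<inter> space M}"

definition TE :: "'t measure \<Rightarrow> nat \<Rightarrow> (nat \<Rightarrow> 't set) \<Rightarrow> 't measure" where
  "TE \<tau> K E = sigma (space \<tau>)
     ({B \<inter> (space \<tau> - (\<Union>i<K. E i)) | B. B \<in> sets \<tau>} \<union> E ` {..<K})"

end

theory Submission
  imports Defs
begin

text \<open>
  Let B be \<open>\<GG>[n]\<close>-invariant and fix a coordinate m. With the other coordinates frozen, the set
  of T-values at coordinate m for which the point lies in B is invariant under every g \<in> G that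
  fixes the finitely many other T-components. On each E k local ergodicity makes such a set null or
  conull: for two cells of a fine partition inside E k that avoid those finitely many points the
  set is simultaneously null or conull, and the remaining cells are at most one more than there
  are points, each of measure at most the mesh, which tends to 0.

  Replacing B, one coordinate at a time, by the set of points whose section through E k has
  positive measure changes it only by a null set (by Fubini, as resampling one T-component from
  \<tau> preserves the product measure), and produces a set C that no longer sees where a T-component
  lies inside its E k. Such a C is its own preimage under the map collapsing each E k to a single
  point, which is \<open>\<T>\<^sub>E\<close>-measurable; so C lies in the \<open>\<T>\<^sub>E\<close>-product \<sigma>-algebra and
  B = C up to null sets.
\<close>

definition stabilizer_invariant :: "('t \<Rightarrow> 't) set \<Rightarrow> 't set \<Rightarrow> 't set \<Rightarrow> bool" where
  "stabilizer_invariant G Z S \<longleftrightarrow> (\<forall>g\<in>G. (\<forall>z\<in>Z. g z = z) \<longrightarrow> (\<forall>s. g s \<in> S \<longleftrightarrow> s \<in> S))"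

lemma bij_fixing_outside_maps_into:
  assumes "bij g" and "\<forall>x. x \<notin> A \<longrightarrow> g x = x" and "x \<in> A"
  shows "g x \<in> A"
proof (rule ccontr)
  assume "g x \<notin> A"
  then have "g (g x) = g x" using assms(2) by blast
  then have "g x = x" using bij_is_inj[OF assms(1)] by (simp add: inj_eq)
  with assms(3) \<open>g x \<notin> A\<close> show False by simp
qed

lemma (in finite_measure) zero_one_on_disjoint_union:
  assumes A: "A \<in> sets M" and B: "B \<in> sets M" and S: "S \<in> sets M" and "A \<inter> B = {}"
    and pos: "measure M A > 0" "measure M B > 0"
    and ratio: "measure M (S \<inter> (A \<union> B)) / measure M (A \<union> B) \<in> {0, 1}"
  shows "(measure M (S \<inter> A) = 0 \<and> measure M (S \<inter> B) = 0)
    \<or> (measure M (A - S) = 0 \<and> measure M (B - S) = 0)"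
proof -
  have AB: "measure M (A \<union> B) = measure M A + measure M B"
    using finite_measure_Union[OF A B] \<open>A \<inter> B = {}\<close> .
  have SAB: "measure M (S \<inter> (A \<union> B)) = measure M (S \<inter> A) + measure M (S \<inter> B)"
    using finite_measure_Union[of "S \<inter> A" "S \<inter> B"] A B S \<open>A \<inter> B = {}\<close>
    by (auto simp: Int_Un_distrib)
  have le: "measure M (S \<inter> A) \<le> measure M A" "measure M (S \<inter> B) \<le> measure M B"
    using A B by (auto intro!: finite_measure_mono)
  have diff: "measure M (A - S) = measure M A - measure M (S \<inter> A)"
    "measure M (B - S) = measure M B - measure M (S \<inter> B)"
    using finite_measure_Diff'[OF A S] finite_measure_Diff'[OF B S] by (auto simp: Int_commute)
  have nn: "measure M (S \<inter> A) \<ge> 0" "measure M (S \<inter> B) \<ge> 0"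
    by auto
  from ratio consider "measure M (S \<inter> (A \<union> B)) = 0"
    | "measure M (S \<inter> (A \<union> B)) = measure M (A \<union> B)"
    using AB pos by (fastforce simp: divide_eq_1_iff)
  then show ?thesis
  proof cases
    case 1
    then show ?thesis using SAB nn by (intro disjI1 conjI) linarith+
  next
    case 2
    then show ?thesis using AB SAB le diff by (intro disjI2 conjI) linarith+
  qed
qed

locale univ_prob_space = prob_space \<tau> for \<tau> :: "'t measure" +
  assumes space_UNIV: "space \<tau> = UNIV"

locale partitioned_space = univ_prob_space \<tau> for \<tau> :: "'t measure" +
  fixes Lp :: "nat \<Rightarrow> nat" and P :: "nat \<Rightarrow> nat \<Rightarrow> 't set" and G :: "('t \<Rightarrow> 't) set"
  assumes partition_filtration: "partition_filtration \<tau> Lp P"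
    and aut_group: "aut_group \<tau> G"
begin

lemma cell_sets: "l < Lp N \<Longrightarrow> P N l \<in> sets \<tau>"
  and cell_measure_pos: "l < Lp N \<Longrightarrow> measure \<tau> (P N l) > 0"
  using partition_filtration unfolding partition_filtration_def by blast+

lemma ex_cell: "\<exists>l<Lp N. x \<in> P N l"
  using partition_filtration space_UNIV unfolding partition_filtration_def by blast

lemma cells_disjoint: "l < Lp N \<Longrightarrow> m < Lp N \<Longrightarrow> l \<noteq> m \<Longrightarrow> P N l \<inter> P N m = {}"
  using partition_filtration unfolding partition_filtration_def disjoint_family_on_def by blast

lemma cell_subset_coarser_cell:
  assumes "N \<le> N'" and "l' < Lp N'"
  shows "\<exists>l<Lp N. P N' l' \<subseteq> P N l"
  using assms
proof (induction N' arbitrary: l' rule: dec_induct)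
  case (step k)
  obtain m where "m < Lp k" "P (Suc k) l' \<subseteq> P k m"
    using partition_filtration step.prems unfolding partition_filtration_def by blast
  with step.IH[of m] show ?case by blast
qed blast

lemma TN_cell_subset_or_disjoint:
  assumes X: "X \<in> TN \<tau> Lp P N0" and "N0 \<le> N" and "l < Lp N"
  shows "P N l \<subseteq> X \<or> P N l \<inter> X = {}"
proof -
  obtain l0 where l0: "l0 < Lp N0" "P N l \<subseteq> P N0 l0"
    using cell_subset_coarser_cell assms(2,3) by blast
  from X have "P N0 l0 \<subseteq> X \<or> P N0 l0 \<inter> X = {}"
    unfolding TN_def
  proof (induction rule: sigma_sets.induct)
    case (Basic a)
    then obtain l' where "a = P N0 l'" "l' < Lp N0" by auto
    then show ?case using cells_disjoint[of l0 N0 l'] l0(1) by (cases "l0 = l'") auto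
  next
    case (Compl a)
    then show ?case using space_UNIV by blast
  qed blast+
  with l0(2) show ?thesis by blast
qed

definition mesh :: "nat \<Rightarrow> real" where
  "mesh N = Max {measure \<tau> (P N l) | l. l < Lp N}"

lemma measure_cell_le_mesh: "l < Lp N \<Longrightarrow> measure \<tau> (P N l) \<le> mesh N"
proof -
  assume "l < Lp N"
  have "{measure \<tau> (P N l) | l. l < Lp N} = (\<lambda>l. measure \<tau> (P N l)) ` {..<Lp N}" by auto
  then have "finite {measure \<tau> (P N l) | l. l < Lp N}" by simp
  then show ?thesis unfolding mesh_def using \<open>l < Lp N\<close> by (intro Max_ge) auto
qed

lemma mesh_nonneg: "0 \<le> mesh N"
proof -
  obtain l where "l < Lp N" using ex_cell by blast
  then show ?thesis using measure_cell_le_mesh[of l N] measure_nonneg[of \<tau> "P N l"] by linarith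
qed

lemma mesh_tendsto_0: "mesh \<longlonglongrightarrow> 0"
  using partition_filtration unfolding partition_filtration_def mesh_def[abs_def] by blast

lemma card_cells_meeting_le:
  assumes "finite Z"
  shows "card {l. l < Lp N \<and> P N l \<inter> Z \<noteq> {}} \<le> card Z"
proof -
  define L where "L = {l. l < Lp N \<and> P N l \<inter> Z \<noteq> {}}"
  define pt where "pt l = (SOME z. z \<in> P N l \<inter> Z)" for l
  have pt: "pt l \<in> P N l \<inter> Z" if "l \<in> L" for l
    using someI_ex[of "\<lambda>z. z \<in> P N l \<inter> Z"] that unfolding pt_def L_def by blast
  have "inj_on pt L"
  proof (rule inj_onI)
    fix l m assume "l \<in> L" "m \<in> L" "pt l = pt m"
    with pt[of l] pt[of m] have "P N l \<inter> P N m \<noteq> {}" by auto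
    with \<open>l \<in> L\<close> \<open>m \<in> L\<close> show "l = m" using cells_disjoint unfolding L_def by blast
  qed
  moreover have "pt ` L \<subseteq> Z" using pt by blast
  ultimately show ?thesis using card_inj_on_le assms unfolding L_def by blast
qed

lemma measure_Int_le_mesh:
  assumes F: "F \<in> TN \<tau> Lp P NE" and N: "NE \<le> N" and Z: "finite Z" and X: "X \<in> sets \<tau>"
    and l0: "l0 < Lp N"
    and null: "\<And>l. l < Lp N \<Longrightarrow> l \<noteq> l0 \<Longrightarrow> P N l \<subseteq> F \<Longrightarrow> P N l \<inter> Z = {}
      \<Longrightarrow> measure \<tau> (X \<inter> P N l) = 0"
  shows "measure \<tau> (X \<inter> F) \<le> (card Z + 1) * mesh N"
proof -
  define Lg where "Lg = {l. l < Lp N \<and> l \<noteq> l0 \<and> P N l \<subseteq> F \<and> P N l \<inter> Z = {}}"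
  define Lb where "Lb = insert l0 {l. l < Lp N \<and> P N l \<inter> Z \<noteq> {}}"
  have Lg_sets: "(\<lambda>l. X \<inter> P N l) ` Lg \<subseteq> sets \<tau>" and Lb_sets: "P N ` Lb \<subseteq> sets \<tau>"
    using X cell_sets l0 unfolding Lg_def Lb_def by auto
  have fin: "finite Lg" "finite Lb"
    unfolding Lg_def Lb_def by auto
  have U_sets: "(\<Union>l\<in>Lg. X \<inter> P N l) \<in> sets \<tau>" "(\<Union>l\<in>Lb. P N l) \<in> sets \<tau>"
    using Lg_sets Lb_sets fin by (intro sets.finite_UN; auto)+
  have "X \<inter> F \<subseteq> (\<Union>l\<in>Lg. X \<inter> P N l) \<union> (\<Union>l\<in>Lb. P N l)"
  proof
    fix x assume x: "x \<in> X \<inter> F"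
    obtain l where l: "l < Lp N" "x \<in> P N l" using ex_cell by blast
    with x TN_cell_subset_or_disjoint[OF F N l(1)] have "P N l \<subseteq> F" by blast
    with l x show "x \<in> (\<Union>l\<in>Lg. X \<inter> P N l) \<union> (\<Union>l\<in>Lb. P N l)"
      unfolding Lg_def Lb_def by blast
  qed
  then have "measure \<tau> (X \<inter> F) \<le> measure \<tau> ((\<Union>l\<in>Lg. X \<inter> P N l) \<union> (\<Union>l\<in>Lb. P N l))"
    using U_sets by (intro finite_measure_mono) auto
  also have "\<dots> \<le> measure \<tau> (\<Union>l\<in>Lg. X \<inter> P N l) + measure \<tau> (\<Union>l\<in>Lb. P N l)"
    using U_sets by (rule measure_Un_le)
  also have "measure \<tau> (\<Union>l\<in>Lg. X \<inter> P N l) \<le> (\<Sum>l\<in>Lg. measure \<tau> (X \<inter> P N l))"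
    using Lg_sets fin by (intro finite_measure_subadditive_finite) auto
  also have "\<dots> = 0"
    using null unfolding Lg_def by simp
  also have "measure \<tau> (\<Union>l\<in>Lb. P N l) \<le> (\<Sum>l\<in>Lb. measure \<tau> (P N l))"
    using Lb_sets fin by (intro finite_measure_subadditive_finite) auto
  also have "\<dots> \<le> card Lb * mesh N"
    using sum_mono[of Lb "\<lambda>l. measure \<tau> (P N l)" "\<lambda>_. mesh N"] measure_cell_le_mesh l0
    unfolding Lb_def by auto
  also have "card Lb \<le> card Z + 1"
    using card_cells_meeting_le[OF Z, of N] unfolding Lb_def by (simp add: card_insert_if)
  then have "card Lb * mesh N \<le> (card Z + 1) * mesh N"
    using mesh_nonneg by (intro mult_right_mono) auto
  finally show ?thesis by simp
qed

lemma finite_locally_ergodic_cells: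
  assumes "finite_locally_ergodic \<tau> Lp P G F"
  obtains NE where "F \<in> TN \<tau> Lp P NE"
    and "\<And>N l m S Z. NE \<le> N \<Longrightarrow> l < Lp N \<Longrightarrow> m < Lp N \<Longrightarrow> l \<noteq> m
      \<Longrightarrow> P N l \<subseteq> F \<Longrightarrow> P N m \<subseteq> F \<Longrightarrow> P N l \<inter> Z = {} \<Longrightarrow> P N m \<inter> Z = {}
      \<Longrightarrow> S \<in> sets \<tau> \<Longrightarrow> stabilizer_invariant G Z S
      \<Longrightarrow> (measure \<tau> (S \<inter> P N l) = 0 \<and> measure \<tau> (S \<inter> P N m) = 0)
        \<or> (measure \<tau> (P N l - S) = 0 \<and> measure \<tau> (P N m - S) = 0)"
proof -
  from assms obtain NE where NE: "F \<in> TN \<tau> Lp P NE" and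
    loc: "\<forall>N\<ge>NE. \<forall>l<Lp N. \<forall>m<Lp N. l \<noteq> m \<and> P N l \<union> P N m \<subseteq> F \<longrightarrow>
      (\<exists>H. subgroup_of H G \<and> (\<forall>g\<in>H. \<forall>x. x \<notin> P N l \<union> P N m \<longrightarrow> g x = x)
        \<and> invariant_trivial \<tau> H (P N l \<union> P N m))"
    unfolding finite_locally_ergodic_def by blast
  show thesis
  proof (rule that[OF NE])
    fix N l m S Z
    assume N: "NE \<le> N" and l: "l < Lp N" and m: "m < Lp N" and "l \<noteq> m"
      and "P N l \<subseteq> F" "P N m \<subseteq> F" and Z: "P N l \<inter> Z = {}" "P N m \<inter> Z = {}"
      and S: "S \<in> sets \<tau>" and inv: "stabilizer_invariant G Z S"
    define A where "A = P N l \<union> P N m"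
    obtain H where H: "subgroup_of H G" "\<forall>g\<in>H. \<forall>x. x \<notin> A \<longrightarrow> g x = x"
      "invariant_trivial \<tau> H A"
      using loc N l m \<open>l \<noteq> m\<close> \<open>P N l \<subseteq> F\<close> \<open>P N m \<subseteq> F\<close> unfolding A_def by blast
    have "{x\<in>A. g x \<in> S \<inter> A} = S \<inter> A" if "g \<in> H" for g
    proof -
      have g: "g \<in> G" using that H(1) unfolding subgroup_of_def by blast
      then have "bij g" using aut_group unfolding aut_group_def by blast
      have "\<forall>z\<in>Z. g z = z" using H(2) that Z unfolding A_def by blast
      then have "g s \<in> S \<longleftrightarrow> s \<in> S" for s using inv g unfolding stabilizer_invariant_def by blast
      with bij_fixing_outside_maps_into[OF \<open>bij g\<close>] H(2) that show ?thesis by blast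
    qed
    then have "measure \<tau> (S \<inter> A) / measure \<tau> A \<in> {0, 1}"
      using H(3) S unfolding invariant_trivial_def by blast
    then show "(measure \<tau> (S \<inter> P N l) = 0 \<and> measure \<tau> (S \<inter> P N m) = 0)
        \<or> (measure \<tau> (P N l - S) = 0 \<and> measure \<tau> (P N m - S) = 0)"
      unfolding A_def
      by (intro zero_one_on_disjoint_union cell_sets cell_measure_pos cells_disjoint S l m \<open>l \<noteq> m\<close>)
  qed
qed

lemma finite_locally_ergodic_zero_one:
  assumes fle: "finite_locally_ergodic \<tau> Lp P G F" and S: "S \<in> sets \<tau>" and Z: "finite Z"
    and inv: "stabilizer_invariant G Z S"
  shows "S \<inter> F \<in> null_sets \<tau> \<or> F - S \<in> null_sets \<tau>"
proof -
  obtain NE where F: "F \<in> TN \<tau> Lp P NE" and pair: "\<And>N l m. NE \<le> N \<Longrightarrow> l < Lp N \<Longrightarrow> m < Lp N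
      \<Longrightarrow> l \<noteq> m \<Longrightarrow> P N l \<subseteq> F \<Longrightarrow> P N m \<subseteq> F \<Longrightarrow> P N l \<inter> Z = {} \<Longrightarrow> P N m \<inter> Z = {}
      \<Longrightarrow> (measure \<tau> (S \<inter> P N l) = 0 \<and> measure \<tau> (S \<inter> P N m) = 0)
        \<or> (measure \<tau> (P N l - S) = 0 \<and> measure \<tau> (P N m - S) = 0)"
    using finite_locally_ergodic_cells[OF fle] S inv by metis
  define c where "c = real (card Z + 1)"
  have bound: "measure \<tau> (S \<inter> F) \<le> c * mesh N \<or> measure \<tau> (F - S) \<le> c * mesh N"
    if N: "NE \<le> N" for N
  proof (cases "\<exists>l1<Lp N. P N l1 \<subseteq> F \<and> P N l1 \<inter> Z = {} \<and> measure \<tau> (S \<inter> P N l1) \<noteq> 0")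
    case True
    then obtain l1 where l1: "l1 < Lp N" "P N l1 \<subseteq> F" "P N l1 \<inter> Z = {}"
      "measure \<tau> (S \<inter> P N l1) \<noteq> 0" by blast
    have "measure \<tau> ((space \<tau> - S) \<inter> F) \<le> c * mesh N"
      unfolding c_def
    proof (rule measure_Int_le_mesh[OF F N Z _ l1(1)])
      show "space \<tau> - S \<in> sets \<tau>" using S by auto
      fix l assume "l < Lp N" "l \<noteq> l1" "P N l \<subseteq> F" "P N l \<inter> Z = {}"
      with pair[OF N l1(1) \<open>l < Lp N\<close>] l1 have "measure \<tau> (P N l - S) = 0" by auto
      moreover have "(space \<tau> - S) \<inter> P N l = P N l - S" using space_UNIV by blast
      ultimately show "measure \<tau> ((space \<tau> - S) \<inter> P N l) = 0" by simp
    qed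
    moreover have "(space \<tau> - S) \<inter> F = F - S" using space_UNIV by blast
    ultimately show ?thesis by simp
  next
    case False
    obtain l0 where "l0 < Lp N" using ex_cell by blast
    have "measure \<tau> (S \<inter> F) \<le> c * mesh N"
      unfolding c_def by (rule measure_Int_le_mesh[OF F N Z S \<open>l0 < Lp N\<close>]) (use False in blast)
    then show ?thesis ..
  qed
  have "measure \<tau> (S \<inter> F) = 0 \<or> measure \<tau> (F - S) = 0"
  proof (rule ccontr)
    assume "\<not> ?thesis"
    then have pos: "0 < min (measure \<tau> (S \<inter> F)) (measure \<tau> (F - S))"
      using measure_nonneg[of \<tau> "S \<inter> F"] measure_nonneg[of \<tau> "F - S"] by linarith
    have "(\<lambda>N. c * mesh N) \<longlonglongrightarrow> 0"
      using tendsto_mult_right_zero[OF mesh_tendsto_0] .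
    from order_tendstoD(2)[OF this pos] obtain N0
      where "\<forall>N\<ge>N0. c * mesh N < min (measure \<tau> (S \<inter> F)) (measure \<tau> (F - S))"
      by (auto simp: eventually_sequentially)
    then have "c * mesh (max N0 NE) < min (measure \<tau> (S \<inter> F)) (measure \<tau> (F - S))"
      by simp
    with bound[of "max N0 NE"] show False by auto
  qed
  moreover have "S \<inter> F \<in> sets \<tau>" "F - S \<in> sets \<tau>"
    using S fle unfolding finite_locally_ergodic_def by auto
  ultimately show ?thesis by (auto simp: emeasure_eq_measure)
qed

lemma locally_ergodic_zero_one:
  assumes le: "locally_ergodic \<tau> Lp P G E" and S: "S \<in> sets \<tau>" and Z: "finite Z"
    and inv: "stabilizer_invariant G Z S"
  shows "S \<inter> E \<in> null_sets \<tau> \<or> E - S \<in> null_sets \<tau>"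
proof -
  obtain F where F: "incseq F" "\<And>j. finite_locally_ergodic \<tau> Lp P G (F j)" "(\<Union>j. F j) = E"
    using le unfolding locally_ergodic_def by blast
  have F_sets: "F j \<in> sets \<tau>" for j
    using F(2) unfolding finite_locally_ergodic_def by blast
  have zero_one: "S \<inter> F j \<in> null_sets \<tau> \<or> F j - S \<in> null_sets \<tau>" for j
    by (rule finite_locally_ergodic_zero_one[OF F(2) S Z inv])
  show ?thesis
  proof (cases "\<forall>j. S \<inter> F j \<in> null_sets \<tau>")
    case True
    then have "(\<Union>j. S \<inter> F j) \<in> null_sets \<tau>" by blast
    then show ?thesis using F(3) by (simp add: Int_UN_distrib)
  next
    case False
    then obtain j0 where j0: "S \<inter> F j0 \<notin> null_sets \<tau>" by blast
    have "F j - S \<in> null_sets \<tau>" for j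
    proof (cases "j0 \<le> j")
      case True
      then have "S \<inter> F j0 \<subseteq> S \<inter> F j" using F(1) by (auto simp: incseq_def)
      then have "S \<inter> F j \<notin> null_sets \<tau>" using j0 S F_sets null_sets_subset by blast
      then show ?thesis using zero_one by blast
    next
      case False
      then have "F j \<subseteq> F j0" using F(1) by (simp add: incseq_def)
      then have "F j - S \<subseteq> F j0 - S" by blast
      moreover have "F j0 - S \<in> null_sets \<tau>" using zero_one j0 by blast
      ultimately show ?thesis using S F_sets null_sets_subset by blast
    qed
    then have "(\<Union>j. F j - S) \<in> null_sets \<tau>" by blast
    moreover have "(\<Union>j. F j - S) = E - S" using F(3) by blast
    ultimately show ?thesis by simp
  qed
qed

end

locale coordinate_space = univ_prob_space \<tau> + \<rho>: sigma_finite_measure \<rho>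
  for \<tau> :: "'t measure" and \<rho> :: "'r measure" +
  fixes n :: nat
begin

abbreviation M :: "(nat \<Rightarrow> 't \<times> 'r) measure" where
  "M \<equiv> \<Pi>\<^sub>M i\<in>{..<n}. \<tau> \<Otimes>\<^sub>M \<rho>"

definition replace_fst :: "nat \<Rightarrow> 't \<Rightarrow> (nat \<Rightarrow> 't \<times> 'r) \<Rightarrow> nat \<Rightarrow> 't \<times> 'r" where
  "replace_fst m s \<omega> = fun_upd \<omega> m (s, snd (\<omega> m))"

lemma replace_fst_same [simp]: "replace_fst m s \<omega> m = (s, snd (\<omega> m))"
  and replace_fst_other [simp]: "i \<noteq> m \<Longrightarrow> replace_fst m s \<omega> i = \<omega> i"
  and replace_fst_replace_fst [simp]: "replace_fst m s (replace_fst m s' \<omega>) = replace_fst m s \<omega>"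
  unfolding replace_fst_def by auto

lemma replace_fst_commute: "m \<noteq> i \<Longrightarrow> replace_fst m s (replace_fst i s' \<omega>) = replace_fst i s' (replace_fst m s \<omega>)"
  unfolding replace_fst_def by (auto simp: fun_upd_twist)

lemma space_M: "space M = (\<Pi>\<^sub>E i\<in>{..<n}. UNIV \<times> space \<rho>)"
  by (simp add: space_PiM space_pair_measure space_UNIV)

lemma replace_fst_in_space:
  assumes "\<omega> \<in> space M" and "m < n"
  shows "replace_fst m s \<omega> \<in> space M"
proof -
  have "\<omega> m \<in> UNIV \<times> space \<rho>"
    using assms unfolding space_M by auto
  then have "snd (\<omega> m) \<in> space \<rho>"
    by (simp add: mem_Times_iff)
  with assms show ?thesis
    unfolding space_M replace_fst_def by (auto simp: PiE_iff extensional_def)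
qed

lemma measurable_replace_fst: "m < n \<Longrightarrow> (\<lambda>(\<omega>, s). replace_fst m s \<omega>) \<in> measurable (M \<Otimes>\<^sub>M \<tau>) M"
  unfolding replace_fst_def split_beta'
  by (rule measurable_fun_upd[where J="{..<n}"]) auto

lemma measurable_fst_component: "m < n \<Longrightarrow> (\<lambda>\<omega>. fst (\<omega> m)) \<in> measurable M \<tau>"
  by measurable

lemma sets_section_replace_fst:
  assumes "m < n" "\<omega> \<in> space M" "Y \<in> sets M"
  shows "{s. replace_fst m s \<omega> \<in> Y} \<in> sets \<tau>"
proof -
  have "(\<lambda>s. replace_fst m s \<omega>) \<in> measurable \<tau> M"
    using measurable_compose[OF measurable_Pair1'[OF assms(2)] measurable_replace_fst[OF assms(1)]]
    by simp
  from measurable_sets[OF this assms(3)] show ?thesis by (simp add: space_UNIV vimage_def)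
qed

lemma gn_replace_fst:
  assumes "\<omega> \<in> space M" and "m < n" and "\<forall>j<n. j \<noteq> m \<longrightarrow> g (fst (\<omega> j)) = fst (\<omega> j)"
  shows "gn g n (replace_fst m s \<omega>) = replace_fst m (g s) \<omega>"
proof -
  have "\<omega> \<in> extensional {..<n}"
    using assms(1) unfolding space_M by (simp add: PiE_iff)
  then show ?thesis
    using assms(2,3) unfolding gn_def replace_fst_def extensional_def
    by (intro ext) (simp add: fun_upd_def)
qed

lemma pair_sigma_finite_tau_rho: "pair_sigma_finite \<tau> \<rho>"
  by (simp add: pair_sigma_finite_def sigma_finite_measure_axioms \<rho>.sigma_finite_measure_axioms)

lemma product_sigma_finite_M: "product_sigma_finite (\<lambda>_. \<tau> \<Otimes>\<^sub>M \<rho>)"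
  unfolding product_sigma_finite_def
  using sigma_finite_pair_measure[OF sigma_finite_measure_axioms \<rho>.sigma_finite_measure_axioms] by blast

lemma nn_integral_emeasure_section_snd:
  assumes A: "A \<in> sets (\<tau> \<Otimes>\<^sub>M \<rho>)"
  shows "(\<integral>\<^sup>+p. emeasure \<tau> {s. (s, snd p) \<in> A} \<partial>(\<tau> \<Otimes>\<^sub>M \<rho>)) = emeasure (\<tau> \<Otimes>\<^sub>M \<rho>) A"
proof -
  interpret pair_sigma_finite \<tau> \<rho> by (rule pair_sigma_finite_tau_rho)
  have g: "(\<lambda>y. emeasure \<tau> {s. (s, y) \<in> A}) \<in> borel_measurable \<rho>"
    using measurable_emeasure_Pair2[OF A] by (simp add: vimage_def)
  have "(\<integral>\<^sup>+p. emeasure \<tau> {s. (s, snd p) \<in> A} \<partial>(\<tau> \<Otimes>\<^sub>M \<rho>)) = (\<integral>\<^sup>+y. emeasure \<tau> {s. (s, y) \<in> A} \<partial>\<rho>)"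
    using nn_integral_snd[of "\<lambda>p. emeasure \<tau> {s. (s, snd p) \<in> A}"] g
    by (simp add: emeasure_space_1)
  also have "\<dots> = emeasure (\<tau> \<Otimes>\<^sub>M \<rho>) A"
    using emeasure_pair_measure_alt2[OF A] by (simp add: vimage_def)
  finally show ?thesis .
qed

lemma section_replace_fst_PiE:
  assumes "m < n" and "\<omega> \<in> space M"
  shows "{s. replace_fst m s \<omega> \<in> (\<Pi>\<^sub>E j\<in>{..<n}. A j)} =
    (if \<forall>j\<in>{..<n}-{m}. \<omega> j \<in> A j then {s. (s, snd (\<omega> m)) \<in> A m} else {})"
proof -
  have "\<omega> \<in> extensional {..<n}"
    using assms(2) unfolding space_M by (simp add: PiE_iff)
  then show ?thesis
    using assms(1) unfolding replace_fst_def by (auto simp: PiE_iff extensional_def)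
qed

lemma distr_replace_fst:
  assumes m: "m < n"
  shows "distr (M \<Otimes>\<^sub>M \<tau>) M (\<lambda>(\<omega>, s). replace_fst m s \<omega>) = M"
proof -
  interpret P: product_sigma_finite "\<lambda>_. \<tau> \<Otimes>\<^sub>M \<rho>" by (rule product_sigma_finite_M)
  show ?thesis
  proof (rule P.PiM_eqI)
    fix A assume A: "\<And>i. i \<in> {..<n} \<Longrightarrow> A i \<in> sets (\<tau> \<Otimes>\<^sub>M \<rho>)"
    define g where "g y = emeasure \<tau> {s. (s, y) \<in> A m}" for y
    define f where "f j = (if j = m then g \<circ> snd else indicator (A j))" for j
    have g: "g \<in> borel_measurable \<rho>"
      using pair_sigma_finite.measurable_emeasure_Pair2[OF pair_sigma_finite_tau_rho A[of m]] m
      unfolding g_def vimage_def by simp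
    have f: "f j \<in> borel_measurable (\<tau> \<Otimes>\<^sub>M \<rho>)" if "j \<in> {..<n}" for j
      using g A[OF that] unfolding f_def by auto
    have PiE_sets: "(\<Pi>\<^sub>E j\<in>{..<n}. A j) \<in> sets M"
      using A by (intro sets_PiM_I_finite) auto
    let ?X = "(\<lambda>(\<omega>, s). replace_fst m s \<omega>) -` (\<Pi>\<^sub>E j\<in>{..<n}. A j) \<inter> space (M \<Otimes>\<^sub>M \<tau>)"
    have emeasure_section: "emeasure \<tau> (Pair \<omega> -` ?X) = (\<Prod>j\<in>{..<n}. f j (\<omega> j))" if \<omega>: "\<omega> \<in> space M" for \<omega>
    proof -
      have "Pair \<omega> -` ?X = {s. replace_fst m s \<omega> \<in> (\<Pi>\<^sub>E j\<in>{..<n}. A j)}"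
        using \<omega> by (auto simp: space_pair_measure space_UNIV)
      moreover have "(\<Prod>j\<in>{..<n}-{m}. f j (\<omega> j)) = (if \<forall>j\<in>{..<n}-{m}. \<omega> j \<in> A j then 1 else 0)"
        unfolding f_def by (auto simp: indicator_def)
      ultimately show ?thesis
        using m by (simp add: section_replace_fst_PiE[OF m \<omega>] prod.remove[of "{..<n}" m] f_def g_def)
    qed
    have "emeasure (distr (M \<Otimes>\<^sub>M \<tau>) M (\<lambda>(\<omega>, s). replace_fst m s \<omega>)) (\<Pi>\<^sub>E j\<in>{..<n}. A j)
        = emeasure (M \<Otimes>\<^sub>M \<tau>) ?X"
      by (rule emeasure_distr[OF measurable_replace_fst[OF m] PiE_sets])
    also have "\<dots> = (\<integral>\<^sup>+\<omega>. emeasure \<tau> (Pair \<omega> -` ?X) \<partial>M)"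
      by (rule emeasure_pair_measure_alt[OF measurable_sets[OF measurable_replace_fst[OF m] PiE_sets]])
    also have "\<dots> = (\<integral>\<^sup>+\<omega>. (\<Prod>j\<in>{..<n}. f j (\<omega> j)) \<partial>M)"
      by (intro nn_integral_cong emeasure_section)
    also have "\<dots> = (\<Prod>j\<in>{..<n}. integral\<^sup>N (\<tau> \<Otimes>\<^sub>M \<rho>) (f j))"
      using f by (intro P.product_nn_integral_prod) auto
    also have "\<dots> = (\<Prod>j\<in>{..<n}. emeasure (\<tau> \<Otimes>\<^sub>M \<rho>) (A j))"
      using A nn_integral_emeasure_section_snd[OF A[of m]] m
      by (intro prod.cong refl) (auto simp: f_def g_def comp_def)
    finally show "emeasure (distr (M \<Otimes>\<^sub>M \<tau>) M (\<lambda>(\<omega>, s). replace_fst m s \<omega>)) (\<Pi>\<^sub>E j\<in>{..<n}. A j)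
        = (\<Prod>j\<in>{..<n}. emeasure (\<tau> \<Otimes>\<^sub>M \<rho>) (A j))" .
  qed simp_all
qed

lemma sets_fst_component_in:
  assumes "m < n" and "Y \<in> sets M" and "A \<in> sets \<tau>"
  shows "{\<omega>\<in>Y. fst (\<omega> m) \<in> A} \<in> sets M"
proof -
  have "{\<omega>\<in>Y. fst (\<omega> m) \<in> A} = Y \<inter> ((\<lambda>\<omega>. fst (\<omega> m)) -` A \<inter> space M)"
    using sets.sets_into_space[OF assms(2)] by blast
  then show ?thesis
    using measurable_sets[OF measurable_fst_component assms(3)] assms by auto
qed

lemma replace_fst_preimage:
  assumes "m < n" and "Y \<in> sets M" and "A \<in> sets \<tau>"
  shows "(\<lambda>(\<omega>, s). replace_fst m s \<omega>) -` {\<omega>\<in>Y. fst (\<omega> m) \<in> A} \<inter> space (M \<Otimes>\<^sub>M \<tau>) \<in> sets (M \<Otimes>\<^sub>M \<tau>)"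
    and "\<omega> \<in> space M \<Longrightarrow> Pair \<omega> -` ((\<lambda>(\<omega>, s). replace_fst m s \<omega>) -` {\<omega>\<in>Y. fst (\<omega> m) \<in> A}
      \<inter> space (M \<Otimes>\<^sub>M \<tau>)) = {s\<in>A. replace_fst m s \<omega> \<in> Y}"
   by (rule measurable_sets[OF measurable_replace_fst sets_fst_component_in]; fact)
     (auto simp: space_pair_measure space_UNIV)

lemma borel_measurable_emeasure_section:
  assumes "m < n" and "Y \<in> sets M" and "A \<in> sets \<tau>"
  shows "(\<lambda>\<omega>. emeasure \<tau> {s\<in>A. replace_fst m s \<omega> \<in> Y}) \<in> borel_measurable M"
proof -
  let ?Q = "(\<lambda>(\<omega>, s). replace_fst m s \<omega>) -` {\<omega>\<in>Y. fst (\<omega> m) \<in> A} \<inter> space (M \<Otimes>\<^sub>M \<tau>)"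
  have "(\<lambda>\<omega>. emeasure \<tau> (Pair \<omega> -` ?Q)) \<in> borel_measurable M"
    by (rule measurable_emeasure_Pair[OF replace_fst_preimage(1)[OF assms]])
  moreover have "emeasure \<tau> (Pair \<omega> -` ?Q) = emeasure \<tau> {s\<in>A. replace_fst m s \<omega> \<in> Y}"
    if "\<omega> \<in> space M" for \<omega>
    by (simp only: replace_fst_preimage(2)[OF assms that])
  ultimately show ?thesis
    by (simp cong: measurable_cong)
qed

lemma emeasure_fst_component_in:
  assumes m: "m < n" and Y: "Y \<in> sets M" and A: "A \<in> sets \<tau>"
  shows "emeasure M {\<omega>\<in>Y. fst (\<omega> m) \<in> A} = (\<integral>\<^sup>+\<omega>. emeasure \<tau> {s\<in>A. replace_fst m s \<omega> \<in> Y} \<partial>M)"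
proof -
  let ?Q = "(\<lambda>(\<omega>, s). replace_fst m s \<omega>) -` {\<omega>\<in>Y. fst (\<omega> m) \<in> A} \<inter> space (M \<Otimes>\<^sub>M \<tau>)"
  have "emeasure M {\<omega>\<in>Y. fst (\<omega> m) \<in> A}
      = emeasure (distr (M \<Otimes>\<^sub>M \<tau>) M (\<lambda>(\<omega>, s). replace_fst m s \<omega>)) {\<omega>\<in>Y. fst (\<omega> m) \<in> A}"
    by (simp add: distr_replace_fst[OF m])
  also have "\<dots> = emeasure (M \<Otimes>\<^sub>M \<tau>) ?Q"
    by (rule emeasure_distr[OF measurable_replace_fst[OF m] sets_fst_component_in[OF assms]])
  also have "\<dots> = (\<integral>\<^sup>+\<omega>. emeasure \<tau> (Pair \<omega> -` ?Q) \<partial>M)"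
    by (rule emeasure_pair_measure_alt[OF replace_fst_preimage(1)[OF assms]])
  also have "\<dots> = (\<integral>\<^sup>+\<omega>. emeasure \<tau> {s\<in>A. replace_fst m s \<omega> \<in> Y} \<partial>M)"
    by (rule nn_integral_cong) (simp only: replace_fst_preimage(2)[OF assms])
  finally show ?thesis .
qed

lemma null_sets_fst_component_in_iff:
  assumes "m < n" and "Y \<in> sets M" and "A \<in> sets \<tau>"
  shows "{\<omega>\<in>Y. fst (\<omega> m) \<in> A} \<in> null_sets M
    \<longleftrightarrow> (AE \<omega> in M. emeasure \<tau> {s\<in>A. replace_fst m s \<omega> \<in> Y} = 0)"
  using sets_fst_component_in[OF assms] emeasure_fst_component_in[OF assms]
    nn_integral_0_iff_AE[OF borel_measurable_emeasure_section[OF assms]]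
  by (simp add: null_sets_def)

lemma AE_section_null:
  assumes "m < n" and "Y \<in> null_sets M"
  shows "AE \<omega> in M. emeasure \<tau> {s. replace_fst m s \<omega> \<in> Y} = 0"
  using null_sets_fst_component_in_iff[OF assms(1) null_setsD2[OF assms(2)] sets.top] assms(2)
  by (simp add: space_UNIV)

end

locale invariant_product_space = partitioned_space \<tau> Lp P G + coordinate_space \<tau> \<rho> n
  for \<tau> :: "'t measure" and Lp P G and \<rho> :: "'r measure" and n +
  fixes K :: nat and E :: "nat \<Rightarrow> 't set"
  assumes E_sets: "\<forall>k<K. E k \<in> sets \<tau>"
    and E_disjoint: "disjoint_family_on E {..<K}"
    and E_locally_ergodic: "\<forall>k<K. locally_ergodic \<tau> Lp P G (E k)"
begin

lemma E_unique: "k < K \<Longrightarrow> k' < K \<Longrightarrow> x \<in> E k \<Longrightarrow> x \<in> E k' \<Longrightarrow> k = k'"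
  using E_disjoint unfolding disjoint_family_on_def by blast

definition section_zero_one :: "(nat \<Rightarrow> 't \<times> 'r) set \<Rightarrow> nat \<Rightarrow> (nat \<Rightarrow> 't \<times> 'r) \<Rightarrow> bool" where
  "section_zero_one X m \<omega> \<longleftrightarrow> (\<forall>k<K. {s\<in>E k. replace_fst m s \<omega> \<in> X} \<in> null_sets \<tau>
     \<or> E k - {s. replace_fst m s \<omega> \<in> X} \<in> null_sets \<tau>)"

lemma invariant_section_zero_one:
  assumes B: "B \<in> invariant_sets M ((\<lambda>g. gn g n) ` G)" and m: "m < n" and \<omega>: "\<omega> \<in> space M"
  shows "section_zero_one B m \<omega>"
proof -
  have B_sets: "B \<in> sets M" and B_inv: "\<And>g. g \<in> G \<Longrightarrow> B = gn g n -` B \<inter> space M"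
    using B unfolding invariant_sets_def by auto
  define S where "S = {s. replace_fst m s \<omega> \<in> B}"
  define Z where "Z = (\<lambda>j. fst (\<omega> j)) ` ({..<n} - {m})"
  have "stabilizer_invariant G Z S"
    unfolding stabilizer_invariant_def
  proof (intro ballI impI allI)
    fix g s assume g: "g \<in> G" and "\<forall>z\<in>Z. g z = z"
    then have "\<forall>j<n. j \<noteq> m \<longrightarrow> g (fst (\<omega> j)) = fst (\<omega> j)"
      unfolding Z_def by blast
    then have "gn g n (replace_fst m s \<omega>) = replace_fst m (g s) \<omega>"
      by (rule gn_replace_fst[OF \<omega> m])
    moreover have "x \<in> B \<longleftrightarrow> gn g n x \<in> B" if "x \<in> space M" for x
      using that by (subst (1) B_inv[OF g]) simp
    ultimately show "g s \<in> S \<longleftrightarrow> s \<in> S"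
      unfolding S_def using replace_fst_in_space[OF \<omega> m] by simp
  qed
  moreover have "S \<in> sets \<tau>" and "finite Z"
    unfolding S_def Z_def using sets_section_replace_fst[OF m \<omega> B_sets] by auto
  ultimately have "S \<inter> E k \<in> null_sets \<tau> \<or> E k - S \<in> null_sets \<tau>" if "k < K" for k
    using locally_ergodic_zero_one E_locally_ergodic that by blast
  moreover have "{s\<in>E k. replace_fst m s \<omega> \<in> B} = S \<inter> E k" "{s. replace_fst m s \<omega> \<in> B} = S" for k
    unfolding S_def by blast+
  ultimately show ?thesis
    unfolding section_zero_one_def by simp
qed

lemma section_zero_one_symdiff_null:
  assumes m: "m < n" and \<omega>: "\<omega> \<in> space M" and X: "X \<in> sets M"
    and B: "section_zero_one B m \<omega>"
    and D: "{s. replace_fst m s \<omega> \<in> sym_diff X B} \<in> null_sets \<tau>"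
  shows "section_zero_one X m \<omega>"
  unfolding section_zero_one_def
proof (intro allI impI)
  fix k assume k: "k < K"
  have sets: "{s\<in>E k. replace_fst m s \<omega> \<in> X} \<in> sets \<tau>" "E k - {s. replace_fst m s \<omega> \<in> X} \<in> sets \<tau>"
    using sets_section_replace_fst[OF m \<omega> X] E_sets k by (auto simp: Collect_conj_eq Int_commute)
  have "{s\<in>E k. replace_fst m s \<omega> \<in> X}
      \<subseteq> {s\<in>E k. replace_fst m s \<omega> \<in> B} \<union> {s. replace_fst m s \<omega> \<in> sym_diff X B}"
    "E k - {s. replace_fst m s \<omega> \<in> X}
      \<subseteq> (E k - {s. replace_fst m s \<omega> \<in> B}) \<union> {s. replace_fst m s \<omega> \<in> sym_diff X B}"
    by blast+
  with B k D sets show "{s\<in>E k. replace_fst m s \<omega> \<in> X} \<in> null_sets \<tau>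
      \<or> E k - {s. replace_fst m s \<omega> \<in> X} \<in> null_sets \<tau>"
    unfolding section_zero_one_def by (meson null_sets.Un null_sets_subset)
qed

lemma AE_section_zero_one:
  assumes m: "m < n" and X: "X \<in> sets M" and XB: "sym_diff X B \<in> null_sets M"
    and B: "\<forall>\<omega>\<in>space M. section_zero_one B m \<omega>"
  shows "AE \<omega> in M. section_zero_one X m \<omega>"
  using AE_space AE_section_null[OF m XB]
proof eventually_elim
  case (elim \<omega>)
  then have "{s. replace_fst m s \<omega> \<in> sym_diff X B} \<in> null_sets \<tau>"
    using sets_section_replace_fst[OF m elim(1) null_setsD2[OF XB]] by blast
  with elim(1) B show ?case
    by (intro section_zero_one_symdiff_null[OF m _ X]) auto
qed

definition residual :: "'t set" where
  "residual = UNIV - (\<Union>k<K. E k)"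

lemma residual_or_E: "x \<in> residual \<or> (\<exists>k<K. x \<in> E k)"
  unfolding residual_def by blast

lemma residual_sets: "residual \<in> sets \<tau>"
  using E_sets space_UNIV unfolding residual_def by (metis sets.compl_sets sets.finite_UN finite_lessThan lessThan_iff)

definition avg :: "nat \<Rightarrow> (nat \<Rightarrow> 't \<times> 'r) set \<Rightarrow> (nat \<Rightarrow> 't \<times> 'r) set" where
  "avg m X = (X \<inter> {\<omega>\<in>space M. fst (\<omega> m) \<in> residual}) \<union>
     (\<Union>k<K. {\<omega>\<in>space M. fst (\<omega> m) \<in> E k \<and> emeasure \<tau> {s\<in>E k. replace_fst m s \<omega> \<in> X} \<noteq> 0})"

lemma avg_residual: "\<omega> \<in> space M \<Longrightarrow> fst (\<omega> m) \<in> residual \<Longrightarrow> \<omega> \<in> avg m X \<longleftrightarrow> \<omega> \<in> X"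
  unfolding avg_def residual_def by blast

lemma avg_E:
  assumes "\<omega> \<in> space M" and "k < K" and "fst (\<omega> m) \<in> E k"
  shows "\<omega> \<in> avg m X \<longleftrightarrow> emeasure \<tau> {s\<in>E k. replace_fst m s \<omega> \<in> X} \<noteq> 0"
  using assms E_unique[OF assms(2) _ assms(3)] unfolding avg_def residual_def by blast

lemma sets_avg:
  assumes m: "m < n" and X: "X \<in> sets M"
  shows "avg m X \<in> sets M"
proof -
  have "{\<omega>\<in>space M. fst (\<omega> m) \<in> E k \<and> emeasure \<tau> {s\<in>E k. replace_fst m s \<omega> \<in> X} \<noteq> 0} \<in> sets M"
    if "k < K" for k
  proof -
    have [measurable]: "E k \<in> sets \<tau>"
      using E_sets \<open>k < K\<close> by blast
    note [measurable] = measurable_fst_component[OF m] borel_measurable_emeasure_section[OF m X this]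
    show ?thesis by measurable
  qed
  moreover have "{\<omega>\<in>space M. fst (\<omega> m) \<in> residual} \<in> sets M"
    using measurable_fst_component[OF m] residual_sets by measurable
  ultimately show ?thesis
    unfolding avg_def using X by (intro sets.Un sets.Int sets.finite_UN) auto
qed

lemma emeasure_section_symdiff_avg:
  assumes m: "m < n" and \<omega>: "\<omega> \<in> space M" and k: "k < K" and zero_one: "section_zero_one X m \<omega>"
  shows "emeasure \<tau> {s\<in>E k. replace_fst m s \<omega> \<in> sym_diff X (avg m X)} = 0"
proof -
  define c where "c = emeasure \<tau> {s\<in>E k. replace_fst m s \<omega> \<in> X}"
  have "replace_fst m s \<omega> \<in> avg m X \<longleftrightarrow> c \<noteq> 0" if "s \<in> E k" for s
    using avg_E[OF replace_fst_in_space[OF \<omega> m] k] that unfolding c_def by simp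
  then have eq: "{s\<in>E k. replace_fst m s \<omega> \<in> sym_diff X (avg m X)}
      = (if c = 0 then {s\<in>E k. replace_fst m s \<omega> \<in> X} else E k - {s. replace_fst m s \<omega> \<in> X})"
    by (cases "c = 0") auto
  show ?thesis
  proof (cases "c = 0")
    case True
    with eq show ?thesis unfolding c_def by simp
  next
    case False
    then have "{s\<in>E k. replace_fst m s \<omega> \<in> X} \<notin> null_sets \<tau>"
      unfolding c_def by auto
    then have "E k - {s. replace_fst m s \<omega> \<in> X} \<in> null_sets \<tau>"
      using zero_one k unfolding section_zero_one_def by blast
    with eq False show ?thesis by auto
  qed
qed

lemma avg_ae_eq:
  assumes m: "m < n" and X: "X \<in> sets M" and zero_one: "AE \<omega> in M. section_zero_one X m \<omega>"
  shows "sym_diff X (avg m X) \<in> null_sets M"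
proof -
  let ?D = "sym_diff X (avg m X)"
  have D: "?D \<in> sets M"
    using X sets_avg[OF m X] by auto
  have "{\<omega>\<in>?D. fst (\<omega> m) \<in> E k} \<in> null_sets M" if k: "k < K" for k
  proof -
    have "AE \<omega> in M. emeasure \<tau> {s\<in>E k. replace_fst m s \<omega> \<in> ?D} = 0"
      using AE_space zero_one by eventually_elim (rule emeasure_section_symdiff_avg[OF m _ k])
    then show ?thesis
      using null_sets_fst_component_in_iff[OF m D] E_sets k by blast
  qed
  then have "(\<Union>k<K. {\<omega>\<in>?D. fst (\<omega> m) \<in> E k}) \<in> null_sets M"
    by (intro null_sets.finite_UN) auto
  moreover have "?D \<subseteq> (\<Union>k<K. {\<omega>\<in>?D. fst (\<omega> m) \<in> E k})"
  proof
    fix \<omega> assume \<omega>: "\<omega> \<in> ?D"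
    then have "fst (\<omega> m) \<notin> residual"
      using avg_residual sets.sets_into_space[OF D] by blast
    then obtain k where "k < K" "fst (\<omega> m) \<in> E k"
      using residual_or_E by blast
    with \<omega> show "\<omega> \<in> (\<Union>k<K. {\<omega>\<in>?D. fst (\<omega> m) \<in> E k})" by blast
  qed
  ultimately show ?thesis
    using null_sets_subset D by blast
qed

definition coord_stable :: "nat \<Rightarrow> (nat \<Rightarrow> 't \<times> 'r) set \<Rightarrow> bool" where
  "coord_stable i X \<longleftrightarrow> (\<forall>\<omega>\<in>space M. \<forall>k<K. \<forall>s\<in>E k. fst (\<omega> i) \<in> E k
     \<longrightarrow> (replace_fst i s \<omega> \<in> X \<longleftrightarrow> \<omega> \<in> X))"

lemma coord_stable_avg:
  assumes m: "m < n"
  shows "coord_stable m (avg m X)"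
  unfolding coord_stable_def
proof (intro ballI allI impI)
  fix \<omega> k s assume \<omega>: "\<omega> \<in> space M" and k: "k < K" and "s \<in> E k" and "fst (\<omega> m) \<in> E k"
  have "replace_fst m s \<omega> \<in> avg m X
      \<longleftrightarrow> emeasure \<tau> {s'\<in>E k. replace_fst m s' (replace_fst m s \<omega>) \<in> X} \<noteq> 0"
    using avg_E[OF replace_fst_in_space[OF \<omega> m] k] \<open>s \<in> E k\<close> by simp
  also have "\<dots> \<longleftrightarrow> \<omega> \<in> avg m X"
    using avg_E[OF \<omega> k \<open>fst (\<omega> m) \<in> E k\<close>] by simp
  finally show "replace_fst m s \<omega> \<in> avg m X \<longleftrightarrow> \<omega> \<in> avg m X" .
qed

lemma coord_stable_avg_other:
  assumes i: "i < n" and m: "m < n" and "i \<noteq> m" and stable: "coord_stable i X"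
  shows "coord_stable i (avg m X)"
  unfolding coord_stable_def
proof (intro ballI allI impI)
  fix \<omega> k s assume \<omega>: "\<omega> \<in> space M" and k: "k < K" and s: "s \<in> E k" and "fst (\<omega> i) \<in> E k"
  define \<omega>' where "\<omega>' = replace_fst i s \<omega>"
  have \<omega>': "\<omega>' \<in> space M" "fst (\<omega>' m) = fst (\<omega> m)"
    unfolding \<omega>'_def using replace_fst_in_space[OF \<omega> i] \<open>i \<noteq> m\<close> by auto
  have X_iff: "replace_fst i s y \<in> X \<longleftrightarrow> y \<in> X" if "y \<in> space M" "fst (y i) \<in> E k" for y
    using stable that k s unfolding coord_stable_def by blast
  show "replace_fst i s \<omega> \<in> avg m X \<longleftrightarrow> \<omega> \<in> avg m X"
    unfolding \<omega>'_def[symmetric]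
  proof (cases "fst (\<omega> m) \<in> residual")
    case True
    have "\<omega>' \<in> avg m X \<longleftrightarrow> \<omega>' \<in> X"
      using avg_residual[OF \<omega>'(1)] \<omega>'(2) True by simp
    also have "\<dots> \<longleftrightarrow> \<omega> \<in> X"
      unfolding \<omega>'_def by (rule X_iff[OF \<omega> \<open>fst (\<omega> i) \<in> E k\<close>])
    also have "\<dots> \<longleftrightarrow> \<omega> \<in> avg m X"
      using avg_residual[OF \<omega> True] by simp
    finally show "\<omega>' \<in> avg m X \<longleftrightarrow> \<omega> \<in> avg m X" .
  next
    case False
    then obtain k' where k': "k' < K" "fst (\<omega> m) \<in> E k'"
      using residual_or_E by blast
    have "replace_fst m s' \<omega>' \<in> X \<longleftrightarrow> replace_fst m s' \<omega> \<in> X" for s'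
      using X_iff[OF replace_fst_in_space[OF \<omega> m]] \<open>fst (\<omega> i) \<in> E k\<close> \<open>i \<noteq> m\<close>
      unfolding \<omega>'_def by (simp add: replace_fst_commute)
    then show "\<omega>' \<in> avg m X \<longleftrightarrow> \<omega> \<in> avg m X"
      using avg_E[OF \<omega>'(1) k'(1)] avg_E[OF \<omega> k'] \<omega>'(2) k'(2) by simp
  qed
qed

primrec avg_iter :: "(nat \<Rightarrow> 't \<times> 'r) set \<Rightarrow> nat \<Rightarrow> (nat \<Rightarrow> 't \<times> 'r) set" where
  "avg_iter X 0 = X"
| "avg_iter X (Suc p) = avg p (avg_iter X p)"

lemma avg_iter_ae_eq_stable:
  assumes B: "B \<in> invariant_sets M ((\<lambda>g. gn g n) ` G)" and "p \<le> n"
  shows "avg_iter B p \<in> sets M \<and> sym_diff (avg_iter B p) B \<in> null_sets M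
    \<and> (\<forall>i<p. coord_stable i (avg_iter B p))"
  using \<open>p \<le> n\<close>
proof (induction p)
  case 0
  then show ?case using B unfolding invariant_sets_def by simp
next
  case (Suc p)
  then have p: "p < n" by simp
  let ?X = "avg_iter B p"
  from Suc have X: "?X \<in> sets M" "sym_diff ?X B \<in> null_sets M" "\<forall>i<p. coord_stable i ?X"
    by auto
  have "AE \<omega> in M. section_zero_one ?X p \<omega>"
    using invariant_section_zero_one[OF B p] by (intro AE_section_zero_one[OF p X(1,2)]) blast
  then have "sym_diff ?X (avg p ?X) \<in> null_sets M"
    by (rule avg_ae_eq[OF p X(1)])
  then have "sym_diff ?X (avg p ?X) \<union> sym_diff ?X B \<in> null_sets M"
    using X(2) by (rule null_sets.Un)
  moreover have "sym_diff (avg p ?X) B \<in> sets M"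
    using sets_avg[OF p X(1)] B unfolding invariant_sets_def by auto
  ultimately have "sym_diff (avg p ?X) B \<in> null_sets M"
    by (rule null_sets_subset) blast
  moreover have "coord_stable i (avg p ?X)" if "i < Suc p" for i
  proof (cases "i = p")
    case True
    then show ?thesis using coord_stable_avg[OF p] by simp
  next
    case False
    with that p X(3) show ?thesis by (intro coord_stable_avg_other) auto
  qed
  ultimately show ?case
    using sets_avg[OF p X(1)] by simp
qed

definition rep :: "nat \<Rightarrow> 't" where
  "rep k = (SOME s. s \<in> E k)"

definition collapse :: "'t \<Rightarrow> 't" where
  "collapse t = (if \<exists>k<K. t \<in> E k then rep (THE k. k < K \<and> t \<in> E k) else t)"

lemma collapse_E:
  assumes "k < K" and "t \<in> E k"
  shows "collapse t = rep k" and "rep k \<in> E k"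
proof -
  have "(THE k. k < K \<and> t \<in> E k) = k"
    using assms E_unique by blast
  then show "collapse t = rep k"
    unfolding collapse_def using assms by auto
  show "rep k \<in> E k"
    unfolding rep_def using assms(2) by (rule someI)
qed

lemma collapse_residual: "t \<in> residual \<Longrightarrow> collapse t = t"
  unfolding collapse_def residual_def by auto

definition collapse_upto :: "nat \<Rightarrow> (nat \<Rightarrow> 't \<times> 'r) \<Rightarrow> nat \<Rightarrow> 't \<times> 'r" where
  "collapse_upto p \<omega> = (\<lambda>j. if j < p then (collapse (fst (\<omega> j)), snd (\<omega> j)) else \<omega> j)"

lemma collapse_upto_mem:
  assumes stable: "\<forall>i<n. coord_stable i C" and \<omega>: "\<omega> \<in> space M" and "p \<le> n"
  shows "collapse_upto p \<omega> \<in> space M \<and> (collapse_upto p \<omega> \<in> C \<longleftrightarrow> \<omega> \<in> C)"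
  using \<open>p \<le> n\<close>
proof (induction p)
  case 0
  then show ?case using \<omega> unfolding collapse_upto_def by simp
next
  case (Suc p)
  then have p: "p < n" and IH: "collapse_upto p \<omega> \<in> space M" "collapse_upto p \<omega> \<in> C \<longleftrightarrow> \<omega> \<in> C"
    by auto
  show ?case
  proof (cases "fst (\<omega> p) \<in> residual")
    case True
    then have "collapse_upto (Suc p) \<omega> = collapse_upto p \<omega>"
      unfolding collapse_upto_def by (auto simp: collapse_residual less_Suc_eq)
    with IH show ?thesis by simp
  next
    case False
    then obtain k where k: "k < K" "fst (\<omega> p) \<in> E k"
      using residual_or_E by blast
    have "collapse_upto (Suc p) \<omega> = replace_fst p (collapse (fst (\<omega> p))) (collapse_upto p \<omega>)"
      unfolding collapse_upto_def replace_fst_def by (auto simp: less_Suc_eq)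
    moreover have "fst (collapse_upto p \<omega> p) \<in> E k"
      unfolding collapse_upto_def using k by simp
    ultimately show ?thesis
      using stable p IH k collapse_E[OF k] replace_fst_in_space[OF IH(1) p]
      unfolding coord_stable_def by simp
  qed
qed

lemma sets_TE: "sets (TE \<tau> K E) = sigma_sets UNIV ({B \<inter> residual | B. B \<in> sets \<tau>} \<union> E ` {..<K})"
  and space_TE: "space (TE \<tau> K E) = UNIV"
proof -
  have gens: "{B \<inter> (space \<tau> - (\<Union>k<K. E k)) | B. B \<in> sets \<tau>} \<union> E ` {..<K} \<subseteq> Pow (space \<tau>)"
    using space_UNIV by auto
  show "sets (TE \<tau> K E) = sigma_sets UNIV ({B \<inter> residual | B. B \<in> sets \<tau>} \<union> E ` {..<K})"
    using sets_measure_of[OF gens] unfolding TE_def residual_def space_UNIV .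
  show "space (TE \<tau> K E) = UNIV"
    using space_measure_of[OF gens] unfolding TE_def space_UNIV .
qed

lemma measurable_collapse: "collapse \<in> measurable (TE \<tau> K E) \<tau>"
proof (rule measurableI)
  fix A assume A: "A \<in> sets \<tau>"
  have "collapse -` A \<inter> space (TE \<tau> K E) = (A \<inter> residual) \<union> (\<Union>k\<in>{k. k < K \<and> rep k \<in> A}. E k)"
  proof (intro set_eqI)
    fix t
    show "t \<in> collapse -` A \<inter> space (TE \<tau> K E) \<longleftrightarrow> t \<in> (A \<inter> residual) \<union> (\<Union>k\<in>{k. k < K \<and> rep k \<in> A}. E k)"
    proof (cases "t \<in> residual")
      case True
      then show ?thesis
        using collapse_residual[OF True] unfolding space_TE residual_def by auto
    next
      case False
      then obtain k where k: "k < K" "t \<in> E k"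
        using residual_or_E by blast
      then have "t \<in> (\<Union>k\<in>{k. k < K \<and> rep k \<in> A}. E k) \<longleftrightarrow> rep k \<in> A"
        using E_unique by blast
      then show ?thesis
        using False collapse_E(1)[OF k] unfolding space_TE by auto
    qed
  qed
  moreover have "A \<inter> residual \<in> sets (TE \<tau> K E)"
    unfolding sets_TE using A by (intro sigma_sets.Basic) blast
  moreover have "E k \<in> sets (TE \<tau> K E)" if "k < K" for k
    unfolding sets_TE using that by (intro sigma_sets.Basic) blast
  ultimately show "collapse -` A \<inter> space (TE \<tau> K E) \<in> sets (TE \<tau> K E)"
    by (auto intro!: sets.Un sets.finite_UN)
qed (simp add: space_UNIV)

lemma space_TE_product: "space (\<Pi>\<^sub>M i\<in>{..<n}. TE \<tau> K E \<Otimes>\<^sub>M \<rho>) = space M"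
  by (simp add: space_PiM space_pair_measure space_TE space_UNIV)

lemma coord_stable_sets_TE:
  assumes C: "C \<in> sets M" and stable: "\<forall>i<n. coord_stable i C"
  shows "C \<in> sets (\<Pi>\<^sub>M i\<in>{..<n}. TE \<tau> K E \<Otimes>\<^sub>M \<rho>)"
proof -
  let ?M' = "\<Pi>\<^sub>M i\<in>{..<n}. TE \<tau> K E \<Otimes>\<^sub>M \<rho>"
  have "collapse_upto n \<in> measurable ?M' M"
    unfolding collapse_upto_def
  proof (rule measurable_PiM_single')
    fix j assume j: "j \<in> {..<n}"
    note [measurable] = measurable_collapse measurable_component_singleton[OF j]
    have "(\<lambda>\<omega>. (collapse (fst (\<omega> j)), snd (\<omega> j))) \<in> measurable ?M' (\<tau> \<Otimes>\<^sub>M \<rho>)"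
      by measurable
    then show "(\<lambda>\<omega>. if j < n then (collapse (fst (\<omega> j)), snd (\<omega> j)) else \<omega> j) \<in> measurable ?M' (\<tau> \<Otimes>\<^sub>M \<rho>)"
      using j by simp
  next
    show "(\<lambda>\<omega> j. if j < n then (collapse (fst (\<omega> j)), snd (\<omega> j)) else \<omega> j)
        \<in> space ?M' \<rightarrow> (\<Pi>\<^sub>E j\<in>{..<n}. space (\<tau> \<Otimes>\<^sub>M \<rho>))"
    proof
      fix \<omega> assume "\<omega> \<in> space ?M'"
      then have "collapse_upto n \<omega> \<in> space M"
        using collapse_upto_mem[OF stable _ order_refl] space_TE_product by auto
      then show "(\<lambda>j. if j < n then (collapse (fst (\<omega> j)), snd (\<omega> j)) else \<omega> j)
          \<in> (\<Pi>\<^sub>E j\<in>{..<n}. space (\<tau> \<Otimes>\<^sub>M \<rho>))"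
        unfolding collapse_upto_def by (simp add: space_PiM)
    qed
  qed
  moreover have "collapse_upto n -` C \<inter> space ?M' = C"
    using collapse_upto_mem[OF stable _ order_refl] sets.sets_into_space[OF C] space_TE_product by auto
  ultimately show ?thesis
    using measurable_sets[OF _ C] by metis
qed

lemma invariant_sets_subset_completion:
  "invariant_sets M ((\<lambda>g. gn g n) ` G)
    \<subseteq> sigma_sets (space M) (sets (\<Pi>\<^sub>M i\<in>{..<n}. TE \<tau> K E \<Otimes>\<^sub>M \<rho>) \<union> null_sets M)"
proof
  fix B assume B: "B \<in> invariant_sets M ((\<lambda>g. gn g n) ` G)"
  let ?\<Sigma> = "sigma_sets (space M) (sets (\<Pi>\<^sub>M i\<in>{..<n}. TE \<tau> K E \<Otimes>\<^sub>M \<rho>) \<union> null_sets M)"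
  interpret \<Sigma>: sigma_algebra "space M" ?\<Sigma>
    using sets.space_closed[of "\<Pi>\<^sub>M i\<in>{..<n}. TE \<tau> K E \<Otimes>\<^sub>M \<rho>"] sets.space_closed[of M]
    by (intro sigma_algebra_sigma_sets) (auto simp: space_TE_product)
  define C where "C = avg_iter B n"
  have C: "C \<in> sets M" "sym_diff C B \<in> null_sets M" "\<forall>i<n. coord_stable i C"
    using avg_iter_ae_eq_stable[OF B order_refl] unfolding C_def by auto
  have B_sets: "B \<in> sets M"
    using B unfolding invariant_sets_def by auto
  have "C - B \<in> null_sets M" "B - C \<in> null_sets M"
    using null_sets_subset[OF C(2)] C(1) B_sets by auto
  moreover have "C \<in> sets (\<Pi>\<^sub>M i\<in>{..<n}. TE \<tau> K E \<Otimes>\<^sub>M \<rho>)"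
    using coord_stable_sets_TE[OF C(1,3)] .
  ultimately have "C \<in> ?\<Sigma>" "C - B \<in> ?\<Sigma>" "B - C \<in> ?\<Sigma>"
    by (auto intro: sigma_sets.Basic)
  then have "(C - (C - B)) \<union> (B - C) \<in> ?\<Sigma>"
    by (metis \<Sigma>.Un \<Sigma>.Diff)
  moreover have "(C - (C - B)) \<union> (B - C) = B"
    by blast
  ultimately show "B \<in> ?\<Sigma>" by simp
qed

end

theorem theorem4p3:
  fixes \<tau> :: "'t measure" and \<rho> :: "'r measure"
    and Lp :: "nat \<Rightarrow> nat" and P :: "nat \<Rightarrow> nat \<Rightarrow> 't set"
    and G :: "('t \<Rightarrow> 't) set" and n K :: nat and E :: "nat \<Rightarrow> 't set"
  assumes "prob_space \<tau>" and "space \<tau> = UNIV"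
    and "partition_filtration \<tau> Lp P"
    and "aut_group \<tau> G"
    and "sigma_finite_measure \<rho>" and "emeasure \<rho> (space \<rho>) > 0"
    and "\<forall>i<K. E i \<in> sets \<tau>"
    and "disjoint_family_on E {..<K}"
    and "\<forall>i<K. locally_ergodic \<tau> Lp P G (E i)"
  shows "invariant_sets (\<Pi>\<^sub>M i\<in>{..<n}. \<tau> \<Otimes>\<^sub>M \<rho>) ((\<lambda>g. gn g n) ` G)
     \<subseteq> sigma_sets (space (\<Pi>\<^sub>M i\<in>{..<n}. \<tau> \<Otimes>\<^sub>M \<rho>))
          (sets (\<Pi>\<^sub>M i\<in>{..<n}. TE \<tau> K E \<Otimes>\<^sub>M \<rho>) \<union> null_sets (\<Pi>\<^sub>M i\<in>{..<n}. \<tau> \<Otimes>\<^sub>M \<rho>))"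
proof -
  interpret invariant_product_space \<tau> Lp P G \<rho> n K E
    by (intro invariant_product_space.intro partitioned_space.intro coordinate_space.intro
        univ_prob_space.intro univ_prob_space_axioms.intro partitioned_space_axioms.intro
        invariant_product_space_axioms.intro) (use assms in auto)
  show ?thesis
    by (rule invariant_sets_subset_completion)
qed

end
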